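(* For $n\ge 1$ and all $k\ge 0$, $$P(n+1,k)=(n+1-k)S(n,k),$$ equivalently $P_{n+1}(x)=(n+1)S_n(x)-xS_n'(x)$. Furthermore, for $n\ge1$ and $0\le k\le\lfloor n/2\rfloor$, $$P(n+1,k)=\frac{(k+1)(n-k+1)}{n-k}P(n,k)+(n-2k+1)P(n,k-1).$$ In particular, $P(n,0)=n$ and $P(n,1)=(n-1)(2^{n-1}-n)$ for $n\ge 1$.
   Context: For a permutation $\pi$ of $[n]=\{1,\dots,n\}$, ${\rm des}(\pi)=\#\{i\in[n-1]:\pi(i)>\pi(i+1)\}$. A double descent is an index $i\in[n-2]$ with $\pi(i)>\pi(i+1)>\pi(i+2)$; $\pi$ is simsun if for every $k\in[n]$ the subword of $\pi$ consisting of the letters in $[k]$ (in order of appearance) has no double descents. Let $\mathcal{RS}_n$ be the set of simsun permutations of $[n]$, $S(n,k)=\#\{\pi\in\mathcal{RS}_n:{\rm des}(\pi)=k\}$, $S_n(x)=\sum_kS(n,k)x^k$. An interior peak of $\pi$ is an index $i\in\{2,\dots,n-1\}$ with $\pi(i-1)<\pi(i)>\pi(i+1)$; ${\rm pk}(\pi)$ is their number. Let $P(n,k)=\#\{\pi\in\mathcal{RS}_n:{\rm pk}(\pi)=k\}$ (with $P(n,-1)=0$) and $P_n(x)=\sum_kP(n,k)x^k$. *)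

theory Defs
  imports Complex_Main "HOL-Computational_Algebra.Polynomial"
begin

text \<open>Permutations of [n] = {1..n} in one-line notation, as lists (0-based positions).\<close>
definition perms_of :: "nat \<Rightarrow> nat list set" where
  "perms_of n = {xs. distinct xs \<and> set xs = {1..n}}"

definition des :: "nat list \<Rightarrow> nat" where
  "des xs = card {i. i + 1 < length xs \<and> xs ! i > xs ! (i + 1)}"

definition has_double_descent :: "nat list \<Rightarrow> bool" where
  "has_double_descent xs \<longleftrightarrow>
     (\<exists>i. i + 2 < length xs \<and> xs ! i > xs ! (i + 1) \<and> xs ! (i + 1) > xs ! (i + 2))"

definition simsun :: "nat \<Rightarrow> nat list \<Rightarrow> bool" where
  "simsun n xs \<longleftrightarrow> (\<forall>k\<in>{1..n}. \<not> has_double_descent (filter (\<lambda>x. x \<le> k) xs))"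

definition RS :: "nat \<Rightarrow> nat list set" where
  "RS n = {xs \<in> perms_of n. simsun n xs}"

definition pk :: "nat list \<Rightarrow> nat" where
  "pk xs = card {i. 0 < i \<and> i + 1 < length xs \<and> xs ! (i - 1) < xs ! i \<and> xs ! i > xs ! (i + 1)}"

definition S :: "nat \<Rightarrow> nat \<Rightarrow> nat" where
  "S n k = card {xs \<in> RS n. des xs = k}"

definition P :: "nat \<Rightarrow> nat \<Rightarrow> nat" where
  "P n k = card {xs \<in> RS n. pk xs = k}"

text \<open>P(n,k-1) with the convention P(n,-1) = 0.\<close>
definition Pprev :: "nat \<Rightarrow> nat \<Rightarrow> nat" where
  "Pprev n k = (if k = 0 then 0 else P n (k - 1))"

definition S_poly :: "nat \<Rightarrow> int poly" where
  "S_poly n = (\<Sum>k\<le>n. monom (int (S n k)) k)"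

definition P_poly :: "nat \<Rightarrow> int poly" where
  "P_poly n = (\<Sum>k\<le>n. monom (int (P n k)) k)"

end

theory Submission
  imports Defs
begin

text \<open>
  Every simsun permutation of [n+1] arises in exactly one way by inserting n+1 into a simsun
  permutation of [n] at a slot that does not split a descent. Having no double descents, a
  simsun permutation has as descents exactly its interior peaks plus possibly position 0, so
  des = pk + [it starts with a descent]. Refining P(n,k) into Pdes0 n k True and Pdes0 n k False
  according to whether the permutation starts with a descent, insertion of the maximum gives
  linear recurrences for the two parts, and by induction
  (k+1) Pdes0 n k True = (n-1-2k) Pdes0 n k False. Since P(n,k) is the sum of the two parts and
  S(n,k) = Pdes0 n k False + Pdes0 n (k-1) True, every claim is a linear consequence.
\<close>

definition insert_at :: "nat list \<Rightarrow> nat \<Rightarrow> nat \<Rightarrow> nat list" where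
  "insert_at xs j m = take j xs @ m # drop j xs"

definition descents :: "nat list \<Rightarrow> nat set" where
  "descents xs = {i. i + 1 < length xs \<and> xs ! i > xs ! (i + 1)}"

definition peaks :: "nat list \<Rightarrow> nat set" where
  "peaks xs = {i. 0 < i \<and> i + 1 < length xs \<and> xs ! (i - 1) < xs ! i \<and> xs ! i > xs ! (i + 1)}"

lemma des_eq_card_descents: "des xs = card (descents xs)"
  by (simp add: des_def descents_def)

lemma pk_eq_card_peaks: "pk xs = card (peaks xs)"
  by (simp add: pk_def peaks_def)

lemma finite_descents [simp]: "finite (descents xs)"
  by (rule finite_subset[of _ "{..<length xs}"]) (auto simp: descents_def)

lemma finite_peaks [simp]: "finite (peaks xs)"
  by (rule finite_subset[of _ "{..<length xs}"]) (auto simp: peaks_def)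

lemma length_insert_at [simp]: "j \<le> length xs \<Longrightarrow> length (insert_at xs j m) = Suc (length xs)"
  by (simp add: insert_at_def)

lemma nth_insert_at:
  assumes "j \<le> length xs" "i \<le> length xs"
  shows "insert_at xs j m ! i = (if i < j then xs ! i else if i = j then m else xs ! (i - 1))"
proof -
  consider "i < j" | "i = j" | "j < i" by linarith
  then show ?thesis
  proof cases
    case 3
    then obtain d where "i = Suc (j + d)" using less_imp_Suc_add by blast
    then show ?thesis using assms by (simp add: insert_at_def nth_append)
  qed (use assms in \<open>simp_all add: insert_at_def nth_append\<close>)
qed

lemma set_insert_at [simp]: "set (insert_at xs j m) = insert m (set xs)"
proof -
  have "set xs = set (take j xs) \<union> set (drop j xs)"
    by (metis append_take_drop_id set_append)
  then show ?thesis by (auto simp: insert_at_def)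
qed

lemma distinct_insert_at [simp]: "distinct (insert_at xs j m) \<longleftrightarrow> distinct xs \<and> m \<notin> set xs"
proof -
  have "distinct (ys @ m # zs) \<longleftrightarrow> distinct (m # (ys @ zs))" for ys zs :: "nat list"
    by auto
  from this[of "take j xs" "drop j xs"] have "distinct (insert_at xs j m) \<longleftrightarrow> distinct (m # xs)"
    unfolding insert_at_def by (simp only: append_take_drop_id)
  then show ?thesis by auto
qed

lemma filter_insert_at_max:
  assumes "\<forall>x\<in>set xs. x \<le> n"
  shows "filter (\<lambda>x. x \<le> n) (insert_at xs j (Suc n)) = xs"
proof -
  have "filter (\<lambda>x. x \<le> n) (take j xs) = take j xs"
    using assms by (intro filter_True) (auto dest: in_set_takeD)
  moreover have "filter (\<lambda>x. x \<le> n) (drop j xs) = drop j xs"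
    using assms by (intro filter_True) (auto dest: in_set_dropD)
  ultimately show ?thesis by (simp add: insert_at_def)
qed

lemma RS_length: "xs \<in> RS n \<Longrightarrow> length xs = n"
  by (auto simp: RS_def perms_of_def dest: distinct_card)

lemma finite_RS [simp]: "finite (RS n)"
proof (rule finite_subset)
  show "RS n \<subseteq> {xs. set xs \<subseteq> {1..n} \<and> length xs = n}"
    by (auto simp: RS_def perms_of_def RS_length dest: distinct_card)
qed (rule finite_lists_length_eq, simp)

lemma simsun_Suc_iff:
  assumes "set xs \<subseteq> {1..Suc n}"
  shows "simsun (Suc n) xs \<longleftrightarrow> simsun n (filter (\<lambda>x. x \<le> n) xs) \<and> \<not> has_double_descent xs"
proof -
  have all: "filter (\<lambda>x. x \<le> Suc n) xs = xs"
    using assms by (intro filter_True) auto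
  have "filter (\<lambda>x. x \<le> k) (filter (\<lambda>x. x \<le> n) xs) = filter (\<lambda>x. x \<le> k) xs" if "k \<le> n" for k
    using that by (auto simp: filter_filter intro: filter_cong)
  then have "simsun (Suc n) xs \<longleftrightarrow> simsun n (filter (\<lambda>x. x \<le> n) xs)
      \<and> \<not> has_double_descent (filter (\<lambda>x. x \<le> Suc n) xs)"
    unfolding simsun_def by (auto simp: atLeastAtMostSuc_conv simp del: filter_filter)
  then show ?thesis using all by simp
qed

lemma RS_no_double_descent: "xs \<in> RS n \<Longrightarrow> \<not> has_double_descent xs"
proof (cases n)
  case 0
  moreover assume "xs \<in> RS n"
  ultimately show ?thesis by (auto simp: RS_def perms_of_def has_double_descent_def)
next
  case (Suc m)
  moreover assume "xs \<in> RS n"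
  ultimately show ?thesis by (auto simp: RS_def perms_of_def simsun_Suc_iff)
qed

lemma peaks_eq_descents_minus_0:
  assumes "distinct xs" "\<not> has_double_descent xs"
  shows "peaks xs = descents xs - {0}"
proof -
  have "xs ! (i - 1) < xs ! i" if "i \<in> descents xs" "0 < i" for i
  proof (rule ccontr)
    assume "\<not> xs ! (i - 1) < xs ! i"
    moreover have "xs ! (i - 1) \<noteq> xs ! i"
      using assms(1) that by (auto simp: descents_def nth_eq_iff_index_eq)
    ultimately have "has_double_descent xs"
      using that unfolding has_double_descent_def descents_def
      by (intro exI[of _ "i - 1"]) auto
    then show False using assms(2) by contradiction
  qed
  then show ?thesis by (auto simp: peaks_def descents_def)
qed

lemma des_eq_pk_plus_first_descent:
  assumes "distinct xs" "\<not> has_double_descent xs"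
  shows "des xs = pk xs + of_bool (0 \<in> descents xs)"
proof (cases "0 \<in> descents xs")
  case True
  then have "descents xs = insert 0 (peaks xs)" "0 \<notin> peaks xs"
    using peaks_eq_descents_minus_0[OF assms] by auto
  then show ?thesis using True by (simp add: des_eq_card_descents pk_eq_card_peaks)
next
  case False
  then have "descents xs = peaks xs"
    using peaks_eq_descents_minus_0[OF assms] by auto
  then show ?thesis using False by (simp add: des_eq_card_descents pk_eq_card_peaks)
qed

lemma double_descent_insert_at_max_iff:
  assumes j: "j \<le> length xs" and m: "\<forall>x\<in>set xs. x < m" and nd: "\<not> has_double_descent xs"
  shows "has_double_descent (insert_at xs j m) \<longleftrightarrow> j \<in> descents xs"
proof
  let ?ys = "insert_at xs j m"
  assume "has_double_descent ?ys"
  then obtain i where i: "i + 2 < Suc (length xs)" "?ys ! i > ?ys ! (i + 1)" "?ys ! (i + 1) > ?ys ! (i + 2)"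
    unfolding has_double_descent_def using j by auto
  have lt: "xs ! k < m" if "k < length xs" for k
    using m that by auto
  consider "i + 2 < j" | "i + 2 = j" | "i + 1 = j" | "i = j" | "j < i" by linarith
  then show "j \<in> descents xs"
  proof cases
    case 1
    then have "xs ! i > xs ! (i + 1)" "xs ! (i + 1) > xs ! (i + 2)" "i + 2 < length xs"
      using i j by (auto simp: nth_insert_at)
    then have "has_double_descent xs"
      unfolding has_double_descent_def by blast
    then show ?thesis using nd by contradiction
  next
    case 2 then show ?thesis using i j lt[of "i + 1"] by (auto simp: nth_insert_at)
  next
    case 3 then show ?thesis using i j lt[of i] by (auto simp: nth_insert_at)
  next
    case 4 then show ?thesis using i j by (auto simp: nth_insert_at descents_def)
  next
    case 5
    then have "xs ! (i - 1) > xs ! i" "xs ! i > xs ! (i + 1)" "i + 1 < length xs"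
      using i j by (auto simp: nth_insert_at)
    then have "has_double_descent xs"
      unfolding has_double_descent_def using 5 by (intro exI[of _ "i - 1"]) simp
    then show ?thesis using nd by contradiction
  qed
next
  assume "j \<in> descents xs"
  then have "j + 1 < length xs" "xs ! j > xs ! (j + 1)" "xs ! j < m"
    using m by (auto simp: descents_def)
  then show "has_double_descent (insert_at xs j m)"
    unfolding has_double_descent_def using j by (intro exI[of _ j]) (auto simp: nth_insert_at)
qed

section \<open>Simsun permutations of [n+1] from those of [n]\<close>

definition admissible_slots :: "nat list \<Rightarrow> nat set" where
  "admissible_slots xs = {..length xs} - descents xs"

lemma insert_at_max_in_RS:
  assumes xs: "xs \<in> RS n" and "j \<in> admissible_slots xs"
  shows "insert_at xs j (Suc n) \<in> RS (Suc n)"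
proof -
  have xs': "distinct xs" "set xs = {1..n}" "simsun n xs" "length xs = n"
    using xs by (auto simp: RS_def perms_of_def RS_length)
  have j: "j \<le> n" "j \<notin> descents xs"
    using \<open>j \<in> admissible_slots xs\<close> xs' by (auto simp: admissible_slots_def)
  have "\<not> has_double_descent (insert_at xs j (Suc n))"
    using double_descent_insert_at_max_iff[of j xs "Suc n"] xs' j RS_no_double_descent[OF xs] by auto
  moreover have "filter (\<lambda>x. x \<le> n) (insert_at xs j (Suc n)) = xs"
    using xs' by (intro filter_insert_at_max) auto
  moreover have "set (insert_at xs j (Suc n)) = {1..Suc n}"
    using xs' by auto
  ultimately show ?thesis
    using xs' by (auto simp: RS_def perms_of_def simsun_Suc_iff)
qed

lemma RS_Suc_remove_max:
  assumes ps: "ps \<in> RS (Suc n)"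
  obtains xs j where "xs \<in> RS n" "j \<in> admissible_slots xs" "ps = insert_at xs j (Suc n)"
proof -
  have ps': "distinct ps" "set ps = {1..Suc n}" "simsun (Suc n) ps"
    using ps by (auto simp: RS_def perms_of_def)
  then have "Suc n \<in> set ps" by simp
  then obtain ys zs where "ps = ys @ Suc n # zs"
    by (blast dest: split_list)
  define xs where "xs = ys @ zs"
  have ps_eq: "ps = insert_at xs (length ys) (Suc n)"
    by (simp add: \<open>ps = ys @ Suc n # zs\<close> xs_def insert_at_def)
  have "Suc n \<notin> set xs" "distinct xs" and ins: "insert (Suc n) (set xs) = {1..Suc n}"
    using ps' by (simp_all add: ps_eq)
  have "set xs = insert (Suc n) (set xs) - {Suc n}"
    using \<open>Suc n \<notin> set xs\<close> by simp
  also have "\<dots> = {1..n}"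
    unfolding ins by auto
  finally have set_xs: "set xs = {1..n}" .
  have "filter (\<lambda>x. x \<le> n) ps = xs"
    unfolding ps_eq using set_xs by (intro filter_insert_at_max) auto
  then have "simsun n xs" and nd: "\<not> has_double_descent ps"
    using ps' simsun_Suc_iff[of ps n] by simp_all
  then have xs: "xs \<in> RS n"
    using set_xs \<open>distinct xs\<close> by (simp add: RS_def perms_of_def)
  have "length ys \<le> length xs"
    by (simp add: xs_def)
  moreover have "length ys \<notin> descents xs"
    using double_descent_insert_at_max_iff[OF \<open>length ys \<le> length xs\<close>, of "Suc n"]
      nd[unfolded ps_eq] set_xs RS_no_double_descent[OF xs] by auto
  ultimately show thesis
    using that xs ps_eq by (simp add: admissible_slots_def)
qed

lemma RS_Suc_eq_image:
  "RS (Suc n) = (\<lambda>(xs, j). insert_at xs j (Suc n)) ` (SIGMA xs:RS n. admissible_slots xs)"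
proof
  show "(\<lambda>(xs, j). insert_at xs j (Suc n)) ` (SIGMA xs:RS n. admissible_slots xs) \<subseteq> RS (Suc n)"
    using insert_at_max_in_RS by auto
  show "RS (Suc n) \<subseteq> (\<lambda>(xs, j). insert_at xs j (Suc n)) ` (SIGMA xs:RS n. admissible_slots xs)"
    by (force elim: RS_Suc_remove_max)
qed

lemma inj_on_insert_at:
  "inj_on (\<lambda>(xs, j). insert_at xs j m) {(xs, j). j \<le> length xs \<and> m \<notin> set xs}"
proof (rule inj_onI, clarify)
  fix xs j xs' j'
  assume j: "j \<le> length xs" "j' \<le> length xs'" and m: "m \<notin> set xs" "m \<notin> set xs'"
    and eq: "insert_at xs j m = insert_at xs' j' m"
  have "m \<notin> set (take j xs)" "m \<notin> set (drop j xs)"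
    using m by (auto dest: in_set_takeD in_set_dropD)
  then have parts: "take j xs = take j' xs'" "drop j xs = drop j' xs'"
    using eq by (simp_all add: insert_at_def append_Cons_eq_iff)
  have "j = length (take j xs)" "j' = length (take j' xs')"
    using j by simp_all
  then have "j = j'"
    using parts by simp
  moreover have "xs = take j' xs' @ drop j' xs'"
    using parts append_take_drop_id[of j xs] by simp
  ultimately show "xs = xs' \<and> j = j'" by simp
qed

lemma peaks_subset_descents: "peaks xs \<subseteq> descents xs"
  by (auto simp: peaks_def descents_def)

lemma peak_insert_at_max_below:
  assumes "j \<le> length xs" "i + 1 < j"
  shows "i \<in> peaks (insert_at xs j m) \<longleftrightarrow> i \<in> peaks xs"
proof -
  have "insert_at xs j m ! (i - 1) = xs ! (i - 1)" "insert_at xs j m ! i = xs ! i"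
      "insert_at xs j m ! (i + 1) = xs ! (i + 1)"
    using assms by (simp_all add: nth_insert_at)
  then show ?thesis
    using assms by (simp add: peaks_def)
qed

lemma peak_insert_at_max_above:
  assumes "j \<le> length xs" "j < i"
  shows "Suc i \<in> peaks (insert_at xs j m) \<longleftrightarrow> i \<in> peaks xs"
proof (cases "i + 1 < length xs")
  case True
  then have "insert_at xs j m ! i = xs ! (i - 1)" "insert_at xs j m ! Suc i = xs ! i"
      "insert_at xs j m ! (Suc i + 1) = xs ! (i + 1)"
    using assms by (simp_all add: nth_insert_at)
  then show ?thesis
    using assms True by (simp add: peaks_def)
qed (use assms in \<open>simp add: peaks_def\<close>)

lemma peak_insert_at_max_near:
  assumes j: "j \<le> length xs" and m: "\<forall>x\<in>set xs. x < m" and i: "j \<le> i + 1" "i \<le> j + 1"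
  shows "i \<in> peaks (insert_at xs j m) \<longleftrightarrow> i = j \<and> 0 < j \<and> j < length xs"
proof -
  let ?ys = "insert_at xs j m"
  have lt: "xs ! k < m" if "k < length xs" for k
    using m that by auto
  consider "i + 1 = j" | "i = j" | "i = j + 1"
    using i by linarith
  then show ?thesis
  proof cases
    case 1
    then have "?ys ! i = xs ! i" "?ys ! (i + 1) = m" "xs ! i < m"
      using j lt[of i] by (simp_all add: nth_insert_at)
    then show ?thesis
      using 1 by (simp add: peaks_def)
  next
    case 2
    show ?thesis
    proof (cases "0 < j \<and> j < length xs")
      case True
      then have "0 < j" "j < length xs"
        by simp_all
      then have "?ys ! (i - 1) = xs ! (j - 1)" "?ys ! i = m" "?ys ! (i + 1) = xs ! j"
          "xs ! (j - 1) < m" "xs ! j < m"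
        using 2 lt[of j] lt[of "j - 1"] by (simp_all add: nth_insert_at)
      then show ?thesis
        using 2 True j by (simp add: peaks_def)
    qed (use 2 j in \<open>auto simp: peaks_def\<close>)
  next
    case 3
    show ?thesis
    proof (cases "j + 1 < length xs")
      case True
      then have "?ys ! (i - 1) = m" "?ys ! i = xs ! j" "xs ! j < m"
        using 3 j lt[of j] by (simp_all add: nth_insert_at)
      then show ?thesis
        using 3 by (simp add: peaks_def)
    qed (use 3 j in \<open>simp add: peaks_def\<close>)
  qed
qed

lemma peaks_insert_at_max:
  assumes j: "j \<le> length xs" and m: "\<forall>x\<in>set xs. x < m"
  shows "peaks (insert_at xs j m) = {i \<in> peaks xs. i + 1 < j} \<union> Suc ` {i \<in> peaks xs. j < i}
           \<union> (if 0 < j \<and> j < length xs then {j} else {})"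
    (is "_ = ?A \<union> ?B \<union> ?C")
proof (rule set_eqI)
  fix i
  consider "i + 1 < j" | "j \<le> i + 1" "i \<le> j + 1" | "j + 1 < i"
    by linarith
  then show "i \<in> peaks (insert_at xs j m) \<longleftrightarrow> i \<in> ?A \<union> ?B \<union> ?C"
  proof cases
    case 1
    then show ?thesis
      using peak_insert_at_max_below[OF j 1] by auto
  next
    case 2
    then show ?thesis
      using peak_insert_at_max_near[OF j m 2] by auto
  next
    case 3
    then obtain i' where "i = Suc i'" "j < i'"
      by (cases i) auto
    then show ?thesis
      using peak_insert_at_max_above[OF j \<open>j < i'\<close>] by auto
  qed
qed

lemma card_peaks_split_at:
  assumes "j \<notin> peaks xs"
  shows "card (peaks xs) = card {i \<in> peaks xs. i + 1 < j} + card {i \<in> peaks xs. j < i}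
    + of_bool (j \<in> Suc ` peaks xs)"
proof -
  define A where "A = {i \<in> peaks xs. i + 1 < j}"
  define B where "B = {i \<in> peaks xs. j < i}"
  define D where "D = {i \<in> peaks xs. Suc i = j}"
  have "i + 1 < j \<or> j < i \<or> Suc i = j" if "i \<in> peaks xs" for i
    using that assms by (cases "i = j") auto
  then have "peaks xs = A \<union> B \<union> D"
    by (auto simp: A_def B_def D_def)
  moreover have "card (A \<union> B \<union> D) = card A + card B + card D"
    by (simp add: card_Un_disjoint A_def B_def D_def disjoint_iff)
  moreover have "D = (if j \<in> Suc ` peaks xs then {j - 1} else {})"
    by (auto simp: D_def)
  ultimately show ?thesis
    by (simp add: A_def B_def)
qed

definition peak_creating_slot :: "nat list \<Rightarrow> nat \<Rightarrow> bool" where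
  "peak_creating_slot xs j \<longleftrightarrow> 0 < j \<and> j < length xs \<and> j \<notin> Suc ` peaks xs"

lemma pk_insert_at_max:
  assumes j: "j \<le> length xs" "j \<notin> descents xs" and m: "\<forall>x\<in>set xs. x < m"
  shows "pk (insert_at xs j m) = pk xs + of_bool (peak_creating_slot xs j)"
proof -
  let ?A = "{i \<in> peaks xs. i + 1 < j}" and ?B = "{i \<in> peaks xs. j < i}"
  let ?C = "if 0 < j \<and> j < length xs then {j} else {}"
  have "card (peaks (insert_at xs j m)) = card (?A \<union> Suc ` ?B \<union> ?C)"
    unfolding peaks_insert_at_max[OF j(1) m] ..
  also have "\<dots> = card (?A \<union> Suc ` ?B) + card ?C"
    by (rule card_Un_disjoint) (auto split: if_splits)
  also have "card (?A \<union> Suc ` ?B) = card ?A + card ?B"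
    by (subst card_Un_disjoint) (auto simp: card_image)
  finally have "pk (insert_at xs j m) = card ?A + card ?B + card ?C"
    by (simp add: pk_eq_card_peaks)
  moreover have "j \<notin> peaks xs"
    using j peaks_subset_descents by blast
  moreover have "j \<in> Suc ` peaks xs \<Longrightarrow> 0 < j \<and> j < length xs"
    by (auto simp: peaks_def)
  ultimately show ?thesis
    using card_peaks_split_at[of j xs] by (auto simp: pk_eq_card_peaks peak_creating_slot_def)
qed

lemma first_descent_insert_at_max:
  assumes j: "j \<le> length xs" and m: "\<forall>x\<in>set xs. x < m" and "xs \<noteq> []"
  shows "0 \<in> descents (insert_at xs j m) \<longleftrightarrow> j = 0 \<or> (j \<noteq> 1 \<and> 0 \<in> descents xs)"
proof -
  have "xs ! 0 < m" "1 \<le> length xs"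
    using m \<open>xs \<noteq> []\<close> by (simp_all add: Suc_leI)
  consider "j = 0" | "j = 1" | "2 \<le> j" by linarith
  then show ?thesis
  proof cases
    case 1
    then show ?thesis using \<open>xs ! 0 < m\<close> \<open>1 \<le> length xs\<close> \<open>xs \<noteq> []\<close>
      by (simp add: descents_def nth_insert_at)
  next
    case 2
    then show ?thesis using \<open>xs ! 0 < m\<close> j by (simp add: descents_def nth_insert_at)
  next
    case 3
    then show ?thesis using j \<open>xs \<noteq> []\<close> by (simp add: descents_def nth_insert_at)
  qed
qed

section \<open>Counting the children of a simsun permutation\<close>

lemma Suc_peaks_disjoint_descents:
  assumes "\<not> has_double_descent xs"
  shows "Suc ` peaks xs \<inter> descents xs = {}"
  using assms by (fastforce simp: has_double_descent_def peaks_def descents_def)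

lemma card_admissible_slots:
  assumes "distinct xs" "\<not> has_double_descent xs"
  shows "int (card (admissible_slots xs)) = int (length xs) + 1 - int (pk xs) - of_bool (0 \<in> descents xs)"
proof -
  have "descents xs \<subseteq> {..length xs}"
    by (auto simp: descents_def)
  then have "card (admissible_slots xs) = Suc (length xs) - des xs"
    by (simp add: admissible_slots_def card_Diff_subset des_eq_card_descents)
  moreover have "des xs \<le> Suc (length xs)"
    using \<open>descents xs \<subseteq> {..length xs}\<close> unfolding des_eq_card_descents
    by (metis card_atMost card_mono finite_atMost)
  ultimately show ?thesis
    using des_eq_pk_plus_first_descent[OF assms] by simp
qed

context
  fixes n :: nat and xs :: "nat list"
  assumes xs: "xs \<in> RS n" and n: "1 \<le> n"
begin

private lemma length_xs: "length xs = n"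
  using xs by (rule RS_length)

private lemma first_descent_child:
  assumes "j \<in> admissible_slots xs"
  shows "0 \<in> descents (insert_at xs j (Suc n)) \<longleftrightarrow> j = 0 \<or> (j \<noteq> 1 \<and> 0 \<in> descents xs)"
proof (rule first_descent_insert_at_max)
  show "j \<le> length xs"
    using assms by (simp add: admissible_slots_def)
  show "\<forall>x\<in>set xs. x < Suc n" "xs \<noteq> []"
    using xs n length_xs by (auto simp: RS_def perms_of_def)
qed

private lemma pk_child:
  assumes "j \<in> admissible_slots xs"
  shows "pk (insert_at xs j (Suc n)) = pk xs + of_bool (peak_creating_slot xs j)"
proof -
  have "\<forall>x\<in>set xs. x < Suc n"
    using xs by (auto simp: RS_def perms_of_def)
  then show ?thesis
    using pk_insert_at_max[of j xs "Suc n"] assms by (simp add: admissible_slots_def)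
qed

private lemma non_peak_creating_slots:
  "{j \<in> admissible_slots xs. \<not> peak_creating_slot xs j}
     = insert n (Suc ` peaks xs \<union> (if 0 \<in> descents xs then {} else {0}))"
proof -
  have P: "i + 1 < n" "0 < i" if "i \<in> peaks xs" for i
    using that length_xs by (auto simp: peaks_def)
  have D: "i + 1 < n" if "i \<in> descents xs" for i
    using that length_xs by (auto simp: descents_def)
  have SP: "Suc ` peaks xs \<inter> descents xs = {}"
    using Suc_peaks_disjoint_descents RS_no_double_descent[OF xs] by blast
  show ?thesis
  proof (rule set_eqI)
    fix j
    show "j \<in> {j \<in> admissible_slots xs. \<not> peak_creating_slot xs j} \<longleftrightarrow>
        j \<in> insert n (Suc ` peaks xs \<union> (if 0 \<in> descents xs then {} else {0}))"
    proof
      assume "j \<in> {j \<in> admissible_slots xs. \<not> peak_creating_slot xs j}"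
      then have "j \<le> n" "j \<notin> descents xs" "j = 0 \<or> n \<le> j \<or> j \<in> Suc ` peaks xs"
        using length_xs by (auto simp: admissible_slots_def peak_creating_slot_def)
      then show "j \<in> insert n (Suc ` peaks xs \<union> (if 0 \<in> descents xs then {} else {0}))"
        by auto
    next
      assume "j \<in> insert n (Suc ` peaks xs \<union> (if 0 \<in> descents xs then {} else {0}))"
      then consider "j = n" | i where "i \<in> peaks xs" "j = Suc i" | "j = 0" "0 \<notin> descents xs"
        by (auto split: if_splits)
      then show "j \<in> {j \<in> admissible_slots xs. \<not> peak_creating_slot xs j}"
      proof cases
        case 1
        then show ?thesis
          using D length_xs by (force simp: admissible_slots_def peak_creating_slot_def)
      next
        case 2
        then show ?thesis
          using P[of i] SP length_xs by (auto simp: admissible_slots_def peak_creating_slot_def)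
      next
        case 3
        then show ?thesis
          by (simp add: admissible_slots_def peak_creating_slot_def)
      qed
    qed
  qed
qed

private lemma card_non_peak_creating_slots:
  "card {j \<in> admissible_slots xs. \<not> peak_creating_slot xs j} = pk xs + 1 + of_bool (0 \<notin> descents xs)"
proof -
  have "n \<notin> Suc ` peaks xs" "0 \<notin> Suc ` peaks xs"
    using length_xs by (auto simp: peaks_def)
  then show ?thesis
    unfolding non_peak_creating_slots using n
    by (simp add: card_image pk_eq_card_peaks)
qed

private lemma card_peak_creating_slots:
  "int (card {j \<in> admissible_slots xs. peak_creating_slot xs j}) = int n - 1 - 2 * int (pk xs)"
proof -
  have fin: "finite (admissible_slots xs)"
    by (simp add: admissible_slots_def)
  have "card (admissible_slots xs) = card {j \<in> admissible_slots xs. peak_creating_slot xs j}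
      + card {j \<in> admissible_slots xs. \<not> peak_creating_slot xs j}"
    using fin by (subst card_Un_disjoint[symmetric]) (auto intro: arg_cong[where f = card])
  then show ?thesis
    using card_admissible_slots[of xs] card_non_peak_creating_slots length_xs
      RS_no_double_descent[OF xs] xs
    by (cases "0 \<in> descents xs") (simp_all add: RS_def perms_of_def)
qed

private lemma card_non_peak_creating_slots_by_first_descent:
  "int (card {j \<in> {j \<in> admissible_slots xs. \<not> peak_creating_slot xs j}.
              (j = 0 \<or> (j \<noteq> 1 \<and> 0 \<in> descents xs)) = d})
     = (if d = (0 \<in> descents xs) then int (pk xs) + 1 else of_bool d)"
proof -
  let ?N = "{j \<in> admissible_slots xs. \<not> peak_creating_slot xs j}"
  have fin: "finite ?N"
    by (simp add: admissible_slots_def)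
  show ?thesis
  proof (cases "0 \<in> descents xs")
    case True
    then have "1 < n"
      using length_xs by (simp add: descents_def)
    then have "j \<noteq> 0 \<and> j \<noteq> 1" if "j \<in> ?N" for j
      using that True unfolding non_peak_creating_slots by (auto simp: peaks_def)
    then have "{j \<in> ?N. (j = 0 \<or> (j \<noteq> 1 \<and> 0 \<in> descents xs)) = d} = (if d then ?N else {})"
      using True by auto
    then show ?thesis
      using True card_non_peak_creating_slots by simp
  next
    case False
    have "0 \<in> ?N"
      using False unfolding non_peak_creating_slots by simp
    then have "{j \<in> ?N. (j = 0 \<or> (j \<noteq> 1 \<and> 0 \<in> descents xs)) = d} = (if d then {0} else ?N - {0})"
      using False by auto
    then show ?thesis
      using False fin \<open>0 \<in> ?N\<close> card_non_peak_creating_slots by simp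
  qed
qed

private lemma card_peak_creating_slots_by_first_descent:
  "int (card {j \<in> {j \<in> admissible_slots xs. peak_creating_slot xs j}.
              (j = 0 \<or> (j \<noteq> 1 \<and> 0 \<in> descents xs)) = d})
     = (if d = (0 \<in> descents xs) then int n - 1 - 2 * int (pk xs) - of_bool d else of_bool (\<not> d))"
proof -
  let ?R = "{j \<in> admissible_slots xs. peak_creating_slot xs j}"
  have fin: "finite ?R"
    by (simp add: admissible_slots_def)
  have not0: "j \<noteq> 0" if "j \<in> ?R" for j
    using that by (simp add: peak_creating_slot_def)
  show ?thesis
  proof (cases "0 \<in> descents xs")
    case True
    have "1 \<notin> descents xs" "1 < n"
      using True RS_no_double_descent[OF xs] length_xs
      by (auto simp: descents_def has_double_descent_def)
    then have "1 \<in> ?R"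
      using length_xs by (auto simp: admissible_slots_def peak_creating_slot_def peaks_def)
    have "{j \<in> ?R. (j = 0 \<or> (j \<noteq> 1 \<and> 0 \<in> descents xs)) = d} = (if d then ?R - {1} else {1})"
      using True not0 \<open>1 \<in> ?R\<close> by auto
    moreover have "0 < card ?R"
      using fin \<open>1 \<in> ?R\<close> card_gt_0_iff by blast
    ultimately show ?thesis
      using True fin \<open>1 \<in> ?R\<close> card_peak_creating_slots by (simp add: of_nat_diff)
  next
    case False
    have "{j \<in> ?R. (j = 0 \<or> (j \<noteq> 1 \<and> 0 \<in> descents xs)) = d} = (if d then {} else ?R)"
      using False not0 by auto
    then show ?thesis
      using False card_peak_creating_slots by simp
  qed
qed

text \<open>
  Slot 0 (when admissible), the last slot and the slots right after a peak keep the number of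
  peaks; every other admissible slot creates one. Only slot 0 produces an initial descent, and
  only slot 1 destroys one.
\<close>

lemma card_children_by_pk_and_first_descent:
  "int (card {j \<in> admissible_slots xs. pk (insert_at xs j (Suc n)) = q
              \<and> (0 \<in> descents (insert_at xs j (Suc n))) = d})
     = (if pk xs = q then (if d = (0 \<in> descents xs) then int (pk xs) + 1 else of_bool d) else 0)
     + (if pk xs + 1 = q then (if d = (0 \<in> descents xs) then int n - 1 - 2 * int (pk xs) - of_bool d
                               else of_bool (\<not> d)) else 0)"
proof -
  let ?first = "\<lambda>j. j = 0 \<or> (j \<noteq> 1 \<and> 0 \<in> descents xs)"
  let ?N = "{j \<in> {j \<in> admissible_slots xs. \<not> peak_creating_slot xs j}. ?first j = d}"
  let ?R = "{j \<in> {j \<in> admissible_slots xs. peak_creating_slot xs j}. ?first j = d}"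
  have "{j \<in> admissible_slots xs. pk (insert_at xs j (Suc n)) = q
          \<and> (0 \<in> descents (insert_at xs j (Suc n))) = d}
      = (if pk xs = q then ?N else {}) \<union> (if pk xs + 1 = q then ?R else {})"
  proof (rule set_eqI)
    fix j
    show "j \<in> {j \<in> admissible_slots xs. pk (insert_at xs j (Suc n)) = q
          \<and> (0 \<in> descents (insert_at xs j (Suc n))) = d}
        \<longleftrightarrow> j \<in> (if pk xs = q then ?N else {}) \<union> (if pk xs + 1 = q then ?R else {})"
    proof (cases "j \<in> admissible_slots xs")
      case True
      then show ?thesis
        using pk_child[OF True] first_descent_child[OF True]
        by (cases "peak_creating_slot xs j") auto
    qed simp
  qed
  moreover have "finite ?N" "finite ?R"
    by (simp_all add: admissible_slots_def)
  ultimately show ?thesis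
    using card_non_peak_creating_slots_by_first_descent[of d]
      card_peak_creating_slots_by_first_descent[of d]
    by (simp add: card_Un_disjoint disjoint_iff)
qed

end

section \<open>Peak counts refined by the first descent\<close>

definition Pdes0 :: "nat \<Rightarrow> nat \<Rightarrow> bool \<Rightarrow> int" where
  "Pdes0 n k d = int (card {xs \<in> RS n. pk xs = k \<and> (0 \<in> descents xs) = d})"

definition Pdes0_prev :: "nat \<Rightarrow> nat \<Rightarrow> bool \<Rightarrow> int" where
  "Pdes0_prev n k d = (if k = 0 then 0 else Pdes0 n (k - 1) d)"

lemma Pdes0_Suc_eq_sum:
  "Pdes0 (Suc n) q d = (\<Sum>xs\<in>RS n. int (card {j \<in> admissible_slots xs.
      pk (insert_at xs j (Suc n)) = q \<and> (0 \<in> descents (insert_at xs j (Suc n))) = d}))"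
proof -
  let ?ins = "\<lambda>(xs, j). insert_at xs j (Suc n)"
  let ?C = "\<lambda>xs. {j \<in> admissible_slots xs.
      pk (insert_at xs j (Suc n)) = q \<and> (0 \<in> descents (insert_at xs j (Suc n))) = d}"
  have "{ps \<in> RS (Suc n). pk ps = q \<and> (0 \<in> descents ps) = d} = ?ins ` (SIGMA xs:RS n. ?C xs)"
    unfolding RS_Suc_eq_image by auto
  moreover have "inj_on ?ins (SIGMA xs:RS n. ?C xs)"
    by (rule inj_on_subset[OF inj_on_insert_at])
      (auto simp: admissible_slots_def RS_def perms_of_def)
  ultimately have "card {ps \<in> RS (Suc n). pk ps = q \<and> (0 \<in> descents ps) = d}
      = card (SIGMA xs:RS n. ?C xs)"
    by (simp add: card_image)
  also have "\<dots> = (\<Sum>xs\<in>RS n. card (?C xs))"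
    by (rule card_SigmaI) (auto simp: admissible_slots_def)
  finally show ?thesis
    by (simp add: Pdes0_def)
qed

lemma sum_RS_if_pk_eq:
  "(\<Sum>xs\<in>RS n. if pk xs = q then g (0 \<in> descents xs) else 0)
     = g True * Pdes0 n q True + g False * Pdes0 n q False"
proof -
  have count: "(\<Sum>xs\<in>RS n. if P xs then c else 0) = c * int (card {xs \<in> RS n. P xs})"
    for P and c :: int
    by (simp add: sum.inter_filter[symmetric])
  have "(\<Sum>xs\<in>RS n. if pk xs = q then g (0 \<in> descents xs) else 0)
      = (\<Sum>xs\<in>RS n. (if pk xs = q \<and> (0 \<in> descents xs) = True then g True else 0)
                    + (if pk xs = q \<and> (0 \<in> descents xs) = False then g False else 0))"
    by (rule sum.cong) auto
  then show ?thesis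
    by (simp only: sum.distrib count Pdes0_def)
qed

lemma sum_RS_if_Suc_pk_eq:
  "(\<Sum>xs\<in>RS n. if pk xs + 1 = q then g (0 \<in> descents xs) else 0)
     = g True * Pdes0_prev n q True + g False * Pdes0_prev n q False"
proof (cases q)
  case (Suc r)
  then show ?thesis
    using sum_RS_if_pk_eq[where q = r] by (simp add: Pdes0_prev_def)
qed (simp add: Pdes0_prev_def)

lemma Pdes0_Suc:
  assumes "1 \<le> n"
  shows "Pdes0 (Suc n) q d = (\<Sum>f\<in>UNIV.
      (if d = f then int q + 1 else of_bool d) * Pdes0 n q f
    + (if d = f then int n + 1 - 2 * int q - of_bool d else of_bool (\<not> d)) * Pdes0_prev n q f)"
proof -
  let ?flat = "\<lambda>f. if d = f then int q + 1 else of_bool d"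
  let ?rise = "\<lambda>f. if d = f then int n + 1 - 2 * int q - of_bool d else of_bool (\<not> d)"
  have "Pdes0 (Suc n) q d = (\<Sum>xs\<in>RS n. (if pk xs = q then ?flat (0 \<in> descents xs) else 0)
      + (if pk xs + 1 = q then ?rise (0 \<in> descents xs) else 0))"
    unfolding Pdes0_Suc_eq_sum
    by (rule sum.cong[OF refl], subst card_children_by_pk_and_first_descent) (use assms in auto)
  also have "\<dots> = ?flat True * Pdes0 n q True + ?flat False * Pdes0 n q False
      + (?rise True * Pdes0_prev n q True + ?rise False * Pdes0_prev n q False)"
    unfolding sum.distrib sum_RS_if_pk_eq[where g = ?flat] sum_RS_if_Suc_pk_eq[where g = ?rise] ..
  also have "\<dots> = (\<Sum>f\<in>UNIV. ?flat f * Pdes0 n q f + ?rise f * Pdes0_prev n q f)"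
    by (simp add: UNIV_bool)
  finally show ?thesis .
qed

lemma Pdes0_Suc_True:
  "1 \<le> n \<Longrightarrow> Pdes0 (Suc n) q True
     = (int q + 1) * Pdes0 n q True + Pdes0 n q False + (int n - 2 * int q) * Pdes0_prev n q True"
  by (simp add: Pdes0_Suc UNIV_bool)

lemma Pdes0_Suc_False:
  "1 \<le> n \<Longrightarrow> Pdes0 (Suc n) q False
     = (int q + 1) * Pdes0 n q False + Pdes0_prev n q True + (int n + 1 - 2 * int q) * Pdes0_prev n q False"
  by (simp add: Pdes0_Suc UNIV_bool)


lemma RS_1: "RS 1 = {[1]}"
proof -
  have "RS 0 = {[]}"
    by (auto simp: RS_def perms_of_def simsun_def)
  moreover have "(SIGMA xs:{[]}. admissible_slots xs) = {([], 0)}"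
    by (auto simp: admissible_slots_def descents_def)
  ultimately show ?thesis
    using RS_Suc_eq_image[of 0] by (simp add: insert_at_def)
qed

lemma Pdes0_base: "Pdes0 1 q d = of_bool (q = 0 \<and> \<not> d)"
proof -
  have "pk [1] = 0" "0 \<notin> descents [1]"
    by (simp_all add: pk_def descents_def)
  then have "{xs \<in> {[1]}. pk xs = q \<and> (0 \<in> descents xs) = d} = (if q = 0 \<and> \<not> d then {[1]} else {})"
    by auto
  then show ?thesis
    unfolding Pdes0_def RS_1 by simp
qed

lemma Pdes0_ratio:
  "1 \<le> n \<Longrightarrow> (int q + 1) * Pdes0 n q True = (int n - 1 - 2 * int q) * Pdes0 n q False"
proof (induction n arbitrary: q rule: nat_induct_at_least)
  case base
  show ?case using Pdes0_base[of q True] Pdes0_base[of q False] by (cases q) simp_all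
next
  case (Suc n)
  have prev: "int q * Pdes0_prev n q True = (int n + 1 - 2 * int q) * Pdes0_prev n q False"
  proof (cases q)
    case (Suc r)
    then show ?thesis
      using Suc.IH[of r] by (simp add: Pdes0_prev_def algebra_simps)
  qed (simp add: Pdes0_prev_def)
  have "(int q + 1) * Pdes0 (Suc n) q True - (int (Suc n) - 1 - 2 * int q) * Pdes0 (Suc n) q False
      = (int q + 1) * ((int q + 1) * Pdes0 n q True - (int n - 1 - 2 * int q) * Pdes0 n q False)
        + (int n - 2 * int q) * (int q * Pdes0_prev n q True - (int n + 1 - 2 * int q) * Pdes0_prev n q False)"
    unfolding Pdes0_Suc_True[OF Suc.hyps] Pdes0_Suc_False[OF Suc.hyps] by (simp add: algebra_simps)
  also have "\<dots> = 0"
    using Suc.IH[of q] prev by simp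
  finally show ?case by simp
qed

lemma Pdes0_prev_ratio:
  "1 \<le> n \<Longrightarrow> int q * Pdes0_prev n q True = (int n + 1 - 2 * int q) * Pdes0_prev n q False"
  using Pdes0_ratio[where q = "q - 1"] by (cases q) (simp_all add: Pdes0_prev_def algebra_simps)

lemma P_eq_Pdes0: "int (P n k) = Pdes0 n k True + Pdes0 n k False"
proof -
  have "{xs \<in> RS n. pk xs = k} = {xs \<in> RS n. pk xs = k \<and> (0 \<in> descents xs) = True}
      \<union> {xs \<in> RS n. pk xs = k \<and> (0 \<in> descents xs) = False}"
    by auto
  then show ?thesis
    by (simp add: P_def Pdes0_def card_Un_disjoint disjoint_iff)
qed

lemma Pprev_eq_Pdes0_prev: "int (Pprev n k) = Pdes0_prev n k True + Pdes0_prev n k False"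
  by (simp add: Pprev_def Pdes0_prev_def P_eq_Pdes0)

lemma S_eq_Pdes0: "int (S n k) = Pdes0 n k False + Pdes0_prev n k True"
proof -
  have des: "des xs = pk xs + of_bool (0 \<in> descents xs)" if "xs \<in> RS n" for xs
    using des_eq_pk_plus_first_descent RS_no_double_descent[OF that] that
    by (simp add: RS_def perms_of_def)
  have "{xs \<in> RS n. des xs = k} = {xs \<in> RS n. pk xs = k \<and> (0 \<in> descents xs) = False}
      \<union> {xs \<in> RS n. pk xs + 1 = k \<and> (0 \<in> descents xs) = True}"
    using des by auto
  then have "int (S n k) = Pdes0 n k False + int (card {xs \<in> RS n. pk xs + 1 = k \<and> 0 \<in> descents xs})"
    by (simp add: S_def Pdes0_def card_Un_disjoint disjoint_iff)
  moreover have "int (card {xs \<in> RS n. pk xs + 1 = k \<and> 0 \<in> descents xs}) = Pdes0_prev n k True"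
    by (cases k) (simp_all add: Pdes0_prev_def Pdes0_def)
  ultimately show ?thesis
    by simp
qed

lemma P_Suc_eq_S:
  assumes "1 \<le> n"
  shows "int (P (Suc n) k) = (int n + 1 - int k) * int (S n k)"
proof -
  have "int (P (Suc n) k) - (int n + 1 - int k) * int (S n k)
      = ((int k + 1) * Pdes0 n k True - (int n - 1 - 2 * int k) * Pdes0 n k False)
        - (int k * Pdes0_prev n k True - (int n + 1 - 2 * int k) * Pdes0_prev n k False)"
    unfolding P_eq_Pdes0 S_eq_Pdes0 Pdes0_Suc_True[OF assms] Pdes0_Suc_False[OF assms]
    by (simp add: algebra_simps)
  also have "\<dots> = 0"
    using Pdes0_ratio[OF assms] Pdes0_prev_ratio[OF assms] by simp
  finally show ?thesis by simp
qed

lemma P_poly_Suc: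
  assumes "1 \<le> n"
  shows "P_poly (n + 1) = smult (int n + 1) (S_poly n) - [:0, 1:] * pderiv (S_poly n)"
proof (rule poly_eqI)
  fix k
  have "coeff (smult (int n + 1) (S_poly n) - [:0, 1:] * pderiv (S_poly n)) k
      = (int n + 1 - int k) * coeff (S_poly n) k"
    by (cases k) (simp_all add: coeff_pderiv algebra_simps)
  then show "coeff (P_poly (n + 1)) k = coeff (smult (int n + 1) (S_poly n) - [:0, 1:] * pderiv (S_poly n)) k"
    using P_Suc_eq_S[OF assms, of k] by (auto simp: P_poly_def S_poly_def coeff_sum)
qed

lemma P_Suc_recurrence_int:
  assumes "1 \<le> n"
  shows "(int n - int k) * int (P (Suc n) k) = (int k + 1) * (int n - int k + 1) * int (P n k)
      + (int n - int k) * (int n - 2 * int k + 1) * int (Pprev n k)"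
proof -
  have a: "(int n - int k) * Pdes0 n k False = (int k + 1) * int (P n k)"
    using Pdes0_ratio[OF assms, of k] unfolding P_eq_Pdes0 by algebra
  have b: "(int n + 1 - int k) * Pdes0_prev n k True = (int n + 1 - 2 * int k) * int (Pprev n k)"
    using Pdes0_prev_ratio[OF assms, of k] unfolding Pprev_eq_Pdes0_prev by algebra
  have "(int n - int k) * int (P (Suc n) k)
      = (int n + 1 - int k) * ((int n - int k) * Pdes0 n k False)
        + (int n - int k) * ((int n + 1 - int k) * Pdes0_prev n k True)"
    unfolding P_Suc_eq_S[OF assms] S_eq_Pdes0 by algebra
  then show ?thesis
    unfolding a b by algebra
qed

lemma P_Suc_recurrence:
  assumes "1 \<le> n" "k < n"
  shows "real (P (Suc n) k) = (real k + 1) * (real n - real k + 1) / (real n - real k) * real (P n k)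
      + (real n - 2 * real k + 1) * real (Pprev n k)"
proof -
  have "(real n - real k) * real (P (Suc n) k) = (real k + 1) * (real n - real k + 1) * real (P n k)
      + (real n - real k) * (real n - 2 * real k + 1) * real (Pprev n k)"
    using arg_cong[OF P_Suc_recurrence_int[OF assms(1), of k], of real_of_int] by simp
  moreover have "real n - real k \<noteq> 0"
    using assms(2) by simp
  ultimately show ?thesis
    by (simp add: field_simps)
qed

lemma Pdes0_0_False: "1 \<le> n \<Longrightarrow> Pdes0 n 0 False = 1"
proof (induction n rule: nat_induct_at_least)
  case base
  show ?case using Pdes0_base[of 0 False] by simp
next
  case (Suc n)
  then show ?case by (simp add: Pdes0_Suc_False Pdes0_prev_def)
qed

lemma P_0: "1 \<le> n \<Longrightarrow> P n 0 = n"
  using Pdes0_ratio[of n 0] Pdes0_0_False[of n] P_eq_Pdes0[of n 0] by simp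

lemma Pdes0_1_False: "1 \<le> n \<Longrightarrow> Pdes0 n 1 False = 2 ^ n - 2 * int n"
proof (induction n rule: nat_induct_at_least)
  case base
  show ?case using Pdes0_base[of 1 False] by simp
next
  case (Suc n)
  have "Pdes0 n 0 True = int n - 1"
    using Pdes0_ratio[OF Suc.hyps, of 0] Pdes0_0_False[OF Suc.hyps] by simp
  have "Pdes0 (Suc n) 1 False = 2 * Pdes0 n 1 False + Pdes0 n 0 True + (int n - 1) * Pdes0 n 0 False"
    using Pdes0_Suc_False[OF Suc.hyps, of 1] by (simp add: Pdes0_prev_def)
  also have "\<dots> = 2 * (2 ^ n - 2 * int n) + (int n - 1) + (int n - 1)"
    using Suc.IH \<open>Pdes0 n 0 True = int n - 1\<close> Pdes0_0_False[OF Suc.hyps] by simp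
  also have "\<dots> = 2 ^ Suc n - 2 * int (Suc n)"
    by simp
  finally show ?case .
qed

lemma P_1: "1 \<le> n \<Longrightarrow> int (P n 1) = (int n - 1) * (2 ^ (n - 1) - int n)"
proof -
  assume n: "1 \<le> n"
  have "2 * int (P n 1) = 2 * Pdes0 n 1 True + 2 * Pdes0 n 1 False"
    by (simp add: P_eq_Pdes0)
  also have "\<dots> = (int n - 1) * Pdes0 n 1 False"
    using Pdes0_ratio[OF n, of 1] by (simp add: algebra_simps)
  also have "\<dots> = (int n - 1) * (2 * 2 ^ (n - 1) - 2 * int n)"
    using n unfolding Pdes0_1_False[OF n] by (cases n) simp_all
  finally show ?thesis
    by (simp add: algebra_simps)
qed

theorem theorem6:
  shows "(\<forall>n\<ge>1. \<forall>k. int (P (n + 1) k) = (int n + 1 - int k) * int (S n k))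
    \<and> (\<forall>n\<ge>1. P_poly (n + 1) = smult (int n + 1) (S_poly n) - [:0, 1:] * pderiv (S_poly n))
    \<and> (\<forall>n\<ge>1. \<forall>k\<le>n div 2.
          real (P (n + 1) k) =
            (real k + 1) * (real n - real k + 1) / (real n - real k) * real (P n k)
            + (real n - 2 * real k + 1) * real (Pprev n k))
    \<and> (\<forall>n\<ge>1. P n 0 = n)
    \<and> (\<forall>n\<ge>1. int (P n 1) = (int n - 1) * (2 ^ (n - 1) - int n))"
proof -
  have "k < n" if "1 \<le> n" "k \<le> n div 2" for n k :: nat
    using that div_less_dividend[of 2 n] by simp
  then show ?thesis
    using P_Suc_eq_S P_poly_Suc P_Suc_recurrence P_0 P_1 by simp
qed

end
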